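(* Let $n\ge 2$, $\sigma=(1,2,\dots,n-1)\in S_n$, and $\rho\in S_n$ defined by $\rho(n-1)=n$, $\rho(n)=n-1$, $\rho(k)=n-1-k$ for $1\le k\le n-2$. Suppose $\tau\in S_n$ has order $2$, $\tau(n)=n-1$, and $\tau\sigma^k\tau=\sigma^{\tau(k)}\tau\sigma^{\tau\rho\tau(k)}$ for all $k\in\{1,\dots,n-2\}$. Then for every $a\in\{1,\dots,n-1\}$ with $\gcd(a,n-1)=1$, the permutation $m_a\tau m_a^{-1}$ also has order $2$, sends $n$ to $n-1$, and satisfies $(m_a\tau m_a^{-1})\sigma^k(m_a\tau m_a^{-1})=\sigma^{\tau'(k)}\tau'\sigma^{\tau'\rho\tau'(k)}$ for all $k\in\{1,\dots,n-2\}$, where $\tau'=m_a\tau m_a^{-1}$.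
   Context: $S_n$ is the symmetric group on $\{1,\dots,n\}$ with product given by composition (rightmost applied first). Identify $\{1,\dots,n-1\}$ with $\mathbb{Z}/(n-1)\mathbb{Z}$ via $k\mapsto k \bmod (n-1)$ (so $n-1$ corresponds to $0$), and hence $\{1,\dots,n\}$ with $\mathbb{Z}/(n-1)\mathbb{Z}\cup\{n\}$. For $a$ coprime to $n-1$, $m_a\in S_n$ is multiplication by $a$ on $\mathbb{Z}/(n-1)\mathbb{Z}$, extended by $m_a(n)=n$. *)

theory Defs
  imports "HOL-Combinatorics.Combinatorics"
begin

text \<open>Permutations of {1..n} are functions nat => nat that permute {1..n}
  (identity outside). Product = function composition (rightmost first).\<close>

definition sigma_n :: "nat \<Rightarrow> nat \<Rightarrow> nat" where
  "sigma_n n i = (if 1 \<le> i \<and> i + 2 \<le> n then i + 1 else if i = n - 1 \<and> 1 \<le> i then 1 else i)"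

definition rho_n :: "nat \<Rightarrow> nat \<Rightarrow> nat" where
  "rho_n n i = (if i = n - 1 then n else if i = n then n - 1
               else if 1 \<le> i \<and> i + 2 \<le> n then n - 1 - i else i)"

text \<open>Multiplication by a on Z/(n-1) with residues represented by 1..n-1
  (n-1 representing 0), fixing n (and everything outside {1..n}).\<close>
definition mult_perm :: "nat \<Rightarrow> nat \<Rightarrow> nat \<Rightarrow> nat" where
  "mult_perm n a i = (if 1 \<le> i \<and> i \<le> n - 1
      then (if (a * i) mod (n - 1) = 0 then n - 1 else (a * i) mod (n - 1)) else i)"

end

theory Submission
  imports Defs "HOL-Number_Theory.Cong"
begin

text \<open>Identify \<open>{1..n-1}\<close> with \<open>\<int>/(n-1)\<close>. Then \<open>\<sigma>\<^sup>k\<close> is translation by \<open>k\<close> and \<open>m\<^sub>a\<close> is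
  multiplication by \<open>a\<close>, so \<open>m\<^sub>a \<sigma>\<^sup>j m\<^sub>a\<^sup>-\<^sup>1 = \<sigma>\<^sup>a\<^sup>j\<close>; and \<open>\<rho>\<close> is negation on the nonzero
  residues and swaps the residue \<open>0 = n-1\<close> with \<open>n\<close>, so it commutes with \<open>m\<^sub>a\<close> because \<open>a\<close>
  is a unit. As exponents of \<open>\<sigma>\<close> only matter modulo \<open>n-1\<close>, also \<open>\<sigma>\<^bsup>m\<^sub>a(x)\<^esup> = \<sigma>\<^sup>a\<^sup>x\<close> for
  \<open>x < n\<close>. Conjugating the relation for \<open>\<tau>\<close> at \<open>j\<close> by \<open>m\<^sub>a\<close> thus yields the relation for
  \<open>\<tau>'\<close> at \<open>m\<^sub>a(j)\<close>; the exponents \<open>\<tau>(j)\<close> and \<open>\<tau>\<rho>\<tau>(j)\<close> are \<open>< n\<close> because \<open>\<tau>\<close> swaps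
  \<open>n\<close> and \<open>n-1\<close> while \<open>j \<noteq> n-1\<close> and \<open>\<rho>\<tau>(j) \<noteq> n-1\<close>.\<close>

definition pos_mod :: "nat \<Rightarrow> nat \<Rightarrow> nat" where
  "pos_mod N x = (if x mod N = 0 then N else x mod N)"

lemma pos_mod_mod [simp]: "pos_mod N x mod N = x mod N"
  by (simp add: pos_mod_def)

lemma pos_mod_eq_iff: "pos_mod N x = pos_mod N y \<longleftrightarrow> [x = y] (mod N)"
  by (metis pos_mod_def pos_mod_mod cong_def)

lemma pos_mod_in: "0 < N \<Longrightarrow> pos_mod N x \<in> {1..N}"
  by (simp add: pos_mod_def less_imp_le_nat)

lemma pos_mod_eq_self: "y \<in> {1..N} \<Longrightarrow> pos_mod N y = y"
  by (cases "y = N") (auto simp: pos_mod_def)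

lemma pos_mod_eq_iff_cong: "y \<in> {1..N} \<Longrightarrow> pos_mod N x = y \<longleftrightarrow> [x = y] (mod N)"
  by (metis pos_mod_eq_iff pos_mod_eq_self)

lemma pos_mod_eq_modulus_iff: "0 < N \<Longrightarrow> pos_mod N x = N \<longleftrightarrow> N dvd x"
  by (metis dvd_eq_mod_eq_0 mod_less_divisor less_irrefl pos_mod_def)

lemma cong_mult_modulus_minus:
  fixes N :: nat
  assumes "[u = a * i] (mod N)" "i \<le> N" "u \<le> N"
  shows "[a * (N - i) = N - u] (mod N)"
proof -
  have "int N dvd int u - int a * int i"
    using assms(1) by (simp add: cong_int_iff[symmetric] cong_iff_dvd_diff)
  moreover have "int a * (int N - int i) - (int N - int u)
      = (int a - 1) * int N + (int u - int a * int i)"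
    by (simp add: algebra_simps)
  ultimately have "[int a * (int N - int i) = int N - int u] (mod int N)"
    unfolding cong_iff_dvd_diff by (metis dvd_add dvd_triv_right)
  with assms(2,3) show ?thesis
    by (simp add: cong_int_iff[symmetric] of_nat_diff)
qed

lemma sigma_n_eq:
  assumes "n \<ge> 2"
  shows "sigma_n n i = (if i \<in> {1..n-1} then pos_mod (n-1) (Suc i) else i)"
proof -
  have "[n = 1] (mod n-1)"
    using assms by (simp add: cong_def mod_if)
  then have "pos_mod (n-1) n = 1"
    using assms by (subst pos_mod_eq_iff_cong) auto
  moreover have "pos_mod (n-1) (Suc i) = Suc i" if "i + 2 \<le> n"
    using that by (intro pos_mod_eq_self) simp
  ultimately show ?thesis
    using assms by (auto simp: sigma_n_def)
qed

lemma funpow_sigma_n: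
  assumes "n \<ge> 2"
  shows "(sigma_n n ^^ k) i = (if i \<in> {1..n-1} then pos_mod (n-1) (i + k) else i)"
proof (induction k)
  case 0
  show ?case by (simp add: pos_mod_eq_self)
next
  case (Suc k)
  have step: "(sigma_n n ^^ Suc k) i = sigma_n n ((sigma_n n ^^ k) i)"
    by simp
  show ?case
  proof (cases "i \<in> {1..n-1}")
    case True
    have "pos_mod (n-1) (i + k) \<in> {1..n-1}"
      using assms by (intro pos_mod_in) simp
    then have "sigma_n n (pos_mod (n-1) (i + k)) = pos_mod (n-1) (Suc (pos_mod (n-1) (i + k)))"
      by (simp only: sigma_n_eq[OF assms] if_True)
    also have "\<dots> = pos_mod (n-1) (i + Suc k)"
      unfolding pos_mod_eq_iff cong_def by (metis mod_Suc_eq pos_mod_mod add_Suc_right)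
    finally show ?thesis
      unfolding step Suc.IH if_P[OF True] .
  next
    case False
    then show ?thesis
      unfolding step Suc.IH if_not_P[OF False] sigma_n_eq[OF assms, of i] by simp
  qed
qed

lemma funpow_sigma_n_cong:
  assumes "n \<ge> 2" "[p = q] (mod n-1)"
  shows "sigma_n n ^^ p = sigma_n n ^^ q"
proof
  fix i
  have "pos_mod (n-1) (i + p) = pos_mod (n-1) (i + q)"
    using assms(2) by (simp add: pos_mod_eq_iff cong_add_lcancel_nat)
  then show "(sigma_n n ^^ p) i = (sigma_n n ^^ q) i"
    by (simp only: funpow_sigma_n[OF assms(1)])
qed

lemma mult_perm_in: "i \<in> {1..n-1} \<Longrightarrow> mult_perm n a i = pos_mod (n-1) (a * i)"
  by (simp add: mult_perm_def pos_mod_def)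

lemma mult_perm_notin: "i \<notin> {1..n-1} \<Longrightarrow> mult_perm n a i = i"
  unfolding mult_perm_def by (subst if_not_P) auto

lemma mult_perm_funpow_sigma_n:
  assumes "n \<ge> 2"
  shows "mult_perm n a ((sigma_n n ^^ j) i) = (sigma_n n ^^ (a * j)) (mult_perm n a i)"
proof (cases "i \<in> {1..n-1}")
  case True
  have range: "pos_mod (n-1) x \<in> {1..n-1}" for x
    using assms by (intro pos_mod_in) simp
  have "[a * pos_mod (n-1) (i + j) = pos_mod (n-1) (a * i) + a * j] (mod n-1)"
    unfolding cong_def
    by (metis pos_mod_mod mod_mult_right_eq mod_add_left_eq distrib_left)
  then have "pos_mod (n-1) (a * pos_mod (n-1) (i + j)) = pos_mod (n-1) (pos_mod (n-1) (a * i) + a * j)"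
    by (simp add: pos_mod_eq_iff)
  with True range show ?thesis
    by (simp only: funpow_sigma_n[OF assms] mult_perm_in if_True)
next
  case False
  then show ?thesis
    by (simp only: funpow_sigma_n[OF assms] mult_perm_notin[OF False] if_False)
qed

lemma funpow_sigma_n_mult_perm:
  assumes "n \<ge> 2" "x < n"
  shows "sigma_n n ^^ mult_perm n a x = sigma_n n ^^ (a * x)"
proof (rule funpow_sigma_n_cong[OF assms(1)])
  show "[mult_perm n a x = a * x] (mod n-1)"
  proof (cases "x = 0")
    case False
    with assms(2) have "x \<in> {1..n-1}" by simp
    then show ?thesis by (simp add: mult_perm_in cong_def)
  qed (simp add: mult_perm_notin)
qed

lemma mult_perm_permutes:
  assumes "coprime a (n-1)"
  shows "mult_perm n a permutes {1..n}"
proof -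
  have maps: "mult_perm n a ` {1..n-1} \<subseteq> {1..n-1}"
    using pos_mod_in[of "n-1"] by (auto simp: mult_perm_in)
  have "inj_on (mult_perm n a) {1..n-1}"
  proof
    fix x y assume x: "x \<in> {1..n-1}" and y: "y \<in> {1..n-1}"
      and "mult_perm n a x = mult_perm n a y"
    then have "[a * x = a * y] (mod n-1)"
      by (simp add: mult_perm_in pos_mod_eq_iff)
    then have "pos_mod (n-1) x = pos_mod (n-1) y"
      using assms by (simp add: pos_mod_eq_iff cong_mult_lcancel_nat)
    with x y show "x = y"
      by (simp add: pos_mod_eq_self)
  qed
  with maps have "bij_betw (mult_perm n a) {1..n-1} {1..n-1}"
    by (simp add: bij_betw_def endo_inj_surj)
  then have "mult_perm n a permutes {1..n-1}"
    by (rule bij_imp_permutes) (simp add: mult_perm_notin)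
  then show ?thesis
    by (rule permutes_subset) auto
qed

lemma mult_perm_fixes:
  assumes "n \<ge> 2"
  shows "mult_perm n a n = n" and "mult_perm n a (n-1) = n-1"
  using assms by (simp_all add: mult_perm_notin mult_perm_in pos_mod_eq_modulus_iff)

lemma mult_perm_image_nonzero:
  assumes "n \<ge> 2" "coprime a (n-1)"
  shows "mult_perm n a ` {1..n-2} = {1..n-2}"
proof -
  have M: "mult_perm n a permutes {1..n}"
    using assms(2) by (rule mult_perm_permutes)
  have "{1..n-2} = {1..n} - {n-1, n}"
    using assms(1) by auto
  moreover have "mult_perm n a ` ({1..n} - {n-1, n}) = {1..n} - {n-1, n}"
    using mult_perm_fixes[OF assms(1), of a]
    by (simp only: image_set_diff[OF permutes_inj[OF M]] permutes_image[OF M] image_insert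
        image_empty)
  ultimately show ?thesis
    by simp
qed

lemma mult_perm_rho_n:
  assumes n: "n \<ge> 2" and a: "coprime a (n-1)"
  shows "mult_perm n a (rho_n n i) = rho_n n (mult_perm n a i)"
proof -
  consider "i \<in> {1..n-2}" | "i = n - 1 \<or> i = n" | "i \<notin> {1..n}"
    by fastforce
  then show ?thesis
  proof cases
    case 1
    let ?u = "mult_perm n a i"
    have u: "?u \<in> {1..n-2}"
      using 1 mult_perm_image_nonzero[OF n a] by blast
    have "[?u = a * i] (mod n-1)"
      using 1 by (subst mult_perm_in) (auto simp: cong_def)
    then have "[a * (n-1-i) = n-1-?u] (mod n-1)"
      using 1 u by (intro cong_mult_modulus_minus) auto
    moreover have "n-1-i \<in> {1..n-1}" "n-1-?u \<in> {1..n-1}"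
      using 1 u by auto
    ultimately have "mult_perm n a (n-1-i) = n-1-?u"
      by (simp add: mult_perm_in pos_mod_eq_iff_cong)
    moreover have "rho_n n i = n-1-i" "rho_n n ?u = n-1-?u"
      using 1 u by (auto simp: rho_n_def)
    ultimately show ?thesis
      by simp
  next
    case 2
    with n mult_perm_fixes[OF n, of a] show ?thesis
      by (auto simp: rho_n_def)
  next
    case 3
    then have "rho_n n i = i" "mult_perm n a i = i"
      using n by (auto simp: rho_n_def intro: mult_perm_notin)
    then show ?thesis
      by simp
  qed
qed

lemma permutes_conj_involution:
  assumes p: "p permutes S" and t: "t permutes S" "t \<circ> t = id" "t \<noteq> id"
  shows "p \<circ> t \<circ> inv p permutes S" and "(p \<circ> t \<circ> inv p) \<circ> (p \<circ> t \<circ> inv p) = id"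
    and "p \<circ> t \<circ> inv p \<noteq> id"
proof -
  show "p \<circ> t \<circ> inv p permutes S"
    using p t(1) by (intro permutes_compose permutes_inv)
  show "(p \<circ> t \<circ> inv p) \<circ> (p \<circ> t \<circ> inv p) = id"
    using t(2) by (simp add: fun_eq_iff permutes_inverses[OF p])
  show "p \<circ> t \<circ> inv p \<noteq> id"
  proof
    assume conj_id: "p \<circ> t \<circ> inv p = id"
    have "p (t x) = p x" for x
      using fun_cong[OF conj_id, of "p x"] by (simp add: permutes_inverses[OF p])
    then have "t = id"
      by (metis eq_id_iff permutes_inverses(2)[OF p])
    with t(3) show False ..
  qed
qed

lemma relation_conj_mult_perm:
  assumes n: "n \<ge> 2" and a: "coprime a (n-1)"
    and tau: "tau permutes {1..n}" "tau \<circ> tau = id" "tau n = n - 1"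
    and j: "j \<in> {1..n-2}"
    and rel: "tau \<circ> (sigma_n n ^^ j) \<circ> tau
      = (sigma_n n ^^ tau j) \<circ> tau \<circ> (sigma_n n ^^ tau (rho_n n (tau j)))"
  defines "tau' \<equiv> mult_perm n a \<circ> tau \<circ> inv (mult_perm n a)"
  shows "tau' \<circ> (sigma_n n ^^ mult_perm n a j) \<circ> tau'
    = (sigma_n n ^^ tau' (mult_perm n a j)) \<circ> tau'
        \<circ> (sigma_n n ^^ tau' (rho_n n (tau' (mult_perm n a j))))"
proof -
  let ?S = "sigma_n n" and ?M = "mult_perm n a"
  have M: "?M permutes {1..n}"
    using a by (rule mult_perm_permutes)
  have tau_tau: "tau (tau x) = x" for x
    using tau(2) by (simp add: fun_eq_iff)
  have tau_in: "tau x \<in> {1..n}" if "x \<in> {1..n}" for x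
    using permutes_in_image[OF tau(1)] that by blast
  have below_n: "x < n" if "x \<in> {1..n}" "tau x \<noteq> n - 1" for x
    using that tau(3) by (cases "x = n") auto
  define q where "q = tau (rho_n n (tau j))"
  have j_in: "j \<in> {1..n}" and "j < n"
    using j by auto
  have "tau j < n"
    using j tau_in[OF j_in] tau_tau[of j] by (intro below_n) auto
  then have "rho_n n (tau j) \<in> {1..n}" "rho_n n (tau j) \<noteq> n - 1"
    using tau_in[OF j_in] by (auto simp: rho_n_def)
  then have "q < n"
    unfolding q_def using tau_in tau_tau by (intro below_n) auto
  have tau'_Mj: "tau' (?M j) = ?M (tau j)"
    by (simp add: tau'_def permutes_inverses[OF M])
  have tau'_rho: "tau' (rho_n n (?M (tau j))) = ?M q"
    by (simp add: q_def tau'_def permutes_inverses[OF M] mult_perm_rho_n[OF n a, symmetric])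
  have M_S: "?M ((?S ^^ m) x) = (?S ^^ (a * m)) (?M x)" for m x
    by (rule mult_perm_funpow_sigma_n[OF n])
  have Minv_S: "inv ?M ((?S ^^ (a * m)) x) = (?S ^^ m) (inv ?M x)" for m x
    by (metis M_S permutes_inverses[OF M])
  have rel_at: "tau ((?S ^^ j) (tau x)) = (?S ^^ tau j) (tau ((?S ^^ q) x))" for x
    using fun_cong[OF rel, of x] by (simp add: q_def)
  show ?thesis
  proof
    fix x
    have "(tau' \<circ> (?S ^^ ?M j) \<circ> tau') x
        = ?M (tau (inv ?M ((?S ^^ (a * j)) (?M (tau (inv ?M x))))))"
      by (simp add: tau'_def funpow_sigma_n_mult_perm[OF n \<open>j < n\<close>])
    also have "\<dots> = ?M (tau ((?S ^^ j) (tau (inv ?M x))))"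
      by (simp add: Minv_S permutes_inverses[OF M])
    also have "\<dots> = ?M ((?S ^^ tau j) (tau ((?S ^^ q) (inv ?M x))))"
      by (simp add: rel_at)
    also have "\<dots> = (?S ^^ (a * tau j)) (?M (tau (inv ?M ((?S ^^ (a * q)) x))))"
      by (simp add: M_S Minv_S)
    also have "\<dots> = (?S ^^ ?M (tau j)) (tau' ((?S ^^ ?M q) x))"
      by (simp add: tau'_def funpow_sigma_n_mult_perm[OF n \<open>tau j < n\<close>]
          funpow_sigma_n_mult_perm[OF n \<open>q < n\<close>])
    also have "\<dots> = ((?S ^^ tau' (?M j)) \<circ> tau' \<circ> (?S ^^ tau' (rho_n n (tau' (?M j))))) x"
      by (simp only: tau'_Mj tau'_rho o_apply)
    finally show "(tau' \<circ> (?S ^^ ?M j) \<circ> tau') x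
        = ((?S ^^ tau' (?M j)) \<circ> tau' \<circ> (?S ^^ tau' (rho_n n (tau' (?M j))))) x" .
  qed
qed

theorem proposition10:
  fixes n :: nat and tau :: "nat \<Rightarrow> nat"
  assumes "n \<ge> 2"
    and "tau permutes {1..n}"
    and "tau \<circ> tau = id" and "tau \<noteq> id"
    and "tau n = n - 1"
    and "\<forall>k\<in>{1..n-2}. tau \<circ> (sigma_n n ^^ k) \<circ> tau
           = (sigma_n n ^^ tau k) \<circ> tau \<circ> (sigma_n n ^^ tau (rho_n n (tau k)))"
  shows "\<forall>a\<in>{1..n-1}. coprime a (n - 1) \<longrightarrow>
    (let tau' = mult_perm n a \<circ> tau \<circ> inv (mult_perm n a) in
      tau' permutes {1..n} \<and> tau' \<circ> tau' = id \<and> tau' \<noteq> id \<and> tau' n = n - 1 \<and>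
      (\<forall>k\<in>{1..n-2}. tau' \<circ> (sigma_n n ^^ k) \<circ> tau'
           = (sigma_n n ^^ tau' k) \<circ> tau' \<circ> (sigma_n n ^^ tau' (rho_n n (tau' k)))))"
proof (intro ballI impI)
  fix a assume a: "coprime a (n - 1)"
  let ?M = "mult_perm n a"
  define tau' where "tau' = ?M \<circ> tau \<circ> inv ?M"
  have M: "?M permutes {1..n}"
    using a by (rule mult_perm_permutes)
  have "inv ?M n = n"
    using mult_perm_fixes[OF assms(1)] by (simp add: permutes_inv_eq[OF M])
  then have "tau' n = n - 1"
    using assms(5) mult_perm_fixes[OF assms(1)] by (simp add: tau'_def)
  moreover have "\<forall>k\<in>{1..n-2}. tau' \<circ> (sigma_n n ^^ k) \<circ> tau'
      = (sigma_n n ^^ tau' k) \<circ> tau' \<circ> (sigma_n n ^^ tau' (rho_n n (tau' k)))"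
  proof
    fix k assume "k \<in> {1..n-2}"
    then obtain j where j: "j \<in> {1..n-2}" and "k = ?M j"
      using mult_perm_image_nonzero[OF assms(1) a] by blast
    then show "tau' \<circ> (sigma_n n ^^ k) \<circ> tau'
      = (sigma_n n ^^ tau' k) \<circ> tau' \<circ> (sigma_n n ^^ tau' (rho_n n (tau' k)))"
      unfolding tau'_def
      using relation_conj_mult_perm[OF assms(1) a assms(2,3,5) j bspec[OF assms(6) j]] by simp
  qed
  ultimately show "let tau' = ?M \<circ> tau \<circ> inv ?M in
      tau' permutes {1..n} \<and> tau' \<circ> tau' = id \<and> tau' \<noteq> id \<and> tau' n = n - 1 \<and>
      (\<forall>k\<in>{1..n-2}. tau' \<circ> (sigma_n n ^^ k) \<circ> tau'
           = (sigma_n n ^^ tau' k) \<circ> tau' \<circ> (sigma_n n ^^ tau' (rho_n n (tau' k))))"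
    using permutes_conj_involution[OF M assms(2-4)] by (simp add: tau'_def Let_def)
qed

end
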